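(* Let $\mathbb{S}$ be a collection of $n$ subsets of $\{1,\dots,m\}$ with $n>m$, each $\mathcal{J}\in\mathbb{S}$ of size $l$. Then $$\max_{\mathcal{J},\mathcal{J}'\in\mathbb{S},\,\mathcal{J}\ne\mathcal{J}'}|\mathcal{J}\cap\mathcal{J}'|\ \ge\ \frac{l^2}{m}.$$ Moreover, if $n=2(m-1)$ and equality holds in this bound, then $\mathbb{S}$ can be partitioned into $m-1$ pairs, each pair consisting of two disjoint subsets of size $m/2$. *)

theory Defs
  imports Complex_Main "HOL-Library.Disjoint_Sets"
begin

definition max_pair_intersection :: "nat set set \<Rightarrow> nat" where
  "max_pair_intersection S =
     Max {card (J \<inter> J') | J J'. J \<in> S \<and> J' \<in> S \<and> J \<noteq> J'}"

end

theory Submission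
  imports Defs "HOL-Library.Function_Algebras" "HOL-Library.Indicator_Function"
begin

text \<open>
  Represent each \<open>J \<in> S\<close> by its centred indicator vector \<open>1\<^sub>J - (l/m)\<one>\<close> in \<open>\<real>\<^sup>m\<close>; these
  vectors lie in the \<open>(m-1)\<close>-dimensional hyperplane orthogonal to \<open>\<one>\<close>, and the inner product of
  the vectors of \<open>J\<close> and \<open>K\<close> is \<open>|J \<inter> K| - l\<^sup>2/m\<close>. If every pairwise intersection were
  smaller than \<open>l\<^sup>2/m\<close>, these \<open>n > m\<close> vectors would be pairwise obtuse, but a pairwise
  obtuse family in a \<open>d\<close>-dimensional space has at most \<open>d + 1\<close> members. In the case of
  equality the vectors are pairwise non-acute, and such a family has at most \<open>2d\<close> members,
  with \<open>2d\<close> attained only if every member has a negative multiple in the family; for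
  centred indicators this means that \<open>S\<close> is closed under complementation in \<open>{1..m}\<close>.
  Both bounds follow by induction on the dimension, projecting orthogonally to one member.
\<close>

text \<open>
  The form is only required to be positive semidefinite: the form \<open>coord_inner m\<close> on
  \<open>nat \<Rightarrow> real\<close> below ignores all coordinates outside \<open>{1..m}\<close>.
\<close>

locale psd_form =
  fixes b :: "'a::real_vector \<Rightarrow> 'a \<Rightarrow> real"
  assumes sym: "b x y = b y x"
    and add_left: "b (x + y) z = b x z + b y z"
    and scaleR_left: "b (c *\<^sub>R x) y = c * b x y"
    and nonneg: "0 \<le> b x x"
begin

lemma diff_left: "b (x - y) z = b x z - b y z"
  using add_left[of "x - y" y z] by simp

lemma add_right: "b x (y + z) = b x y + b x z"
  and diff_right: "b x (y - z) = b x y - b x z"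
  and scaleR_right: "b x (c *\<^sub>R y) = c * b x y"
  by (simp_all only: sym[of x] add_left diff_left scaleR_left)

lemma zero_left [simp]: "b 0 y = 0"
  using scaleR_left[of 0 y y] by simp

lemma eq_0_if_null:
  assumes "b x x = 0"
  shows "b x y = 0"
proof (rule ccontr)
  assume ne: "b x y \<noteq> 0"
  define t where "t = - (b y y + 1) / (2 * b x y)"
  have "0 \<le> b (t *\<^sub>R x + y) (t *\<^sub>R x + y)" by (rule nonneg)
  also have "\<dots> = 2 * t * b x y + b y y"
    using assms by (simp add: add_left add_right scaleR_left scaleR_right sym[of y x] algebra_simps)
  also have "\<dots> = -1"
    using ne by (simp add: t_def field_simps)
  finally show False by simp
qed

definition proj_perp :: "'a \<Rightarrow> 'a \<Rightarrow> 'a" where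
  "proj_perp x y = y - (b y x / b x x) *\<^sub>R x"

lemma linear_proj_perp: "linear (proj_perp x)"
proof (rule linearI)
  show "proj_perp x (y + z) = proj_perp x y + proj_perp x z" for y z
    by (simp add: proj_perp_def add_left add_divide_distrib scaleR_add_left)
  show "proj_perp x (c *\<^sub>R y) = c *\<^sub>R proj_perp x y" for c y
    by (simp add: proj_perp_def scaleR_left scaleR_diff_right)
qed

lemma proj_perp_self: "b x x \<noteq> 0 \<Longrightarrow> proj_perp x x = 0"
  by (simp add: proj_perp_def)

lemma proj_perp_orthogonal: "b x x \<noteq> 0 \<Longrightarrow> b (proj_perp x y) x = 0"
  by (simp add: proj_perp_def diff_left scaleR_left)

lemma proj_perp_proj_perp:
  assumes "b x x \<noteq> 0"
  shows "b (proj_perp x y) (proj_perp x z) = b y z - b y x * b z x / b x x"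
proof -
  have "b x (proj_perp x z) = 0"
    using proj_perp_orthogonal[OF assms] by (simp add: sym[of x])
  then have "b (proj_perp x y) (proj_perp x z) = b y (proj_perp x z)"
    by (simp add: proj_perp_def diff_left scaleR_left)
  then show ?thesis
    by (simp add: proj_perp_def diff_right scaleR_right)
qed

lemma proj_perp_proj_perp_le:
  assumes "0 < b x x" "b y x \<le> 0" "b z x \<le> 0"
  shows "b (proj_perp x y) (proj_perp x z) \<le> b y z"
  using assms by (simp add: proj_perp_proj_perp mult_nonpos_nonpos)

lemma span_proj_perp_smaller:
  assumes fin: "finite B" and x: "x \<in> span B" and pos: "0 < b x x"
  obtains B' where "finite B'" "card B' < card B" "proj_perp x ` span B \<subseteq> span B'"
proof -
  txt \<open>Since \<open>proj_perp x x = 0\<close>, a spanning vector with a nonzero coefficient in \<open>x\<close> becomes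
    redundant after projection.\<close>
  define P where "P = proj_perp x"
  have lin: "linear P"
    unfolding P_def by (rule linear_proj_perp)
  obtain u where xu: "x = (\<Sum>v\<in>B. u v *\<^sub>R v)"
    using x span_finite[OF fin] by auto
  have "x \<noteq> 0"
    using pos by auto
  then obtain v0 where v0: "v0 \<in> B" "u v0 \<noteq> 0"
    using xu by (metis (no_types, lifting) scaleR_zero_left sum.neutral)
  have "u v0 *\<^sub>R P v0 + (\<Sum>v\<in>B - {v0}. u v *\<^sub>R P v) = (\<Sum>v\<in>B. u v *\<^sub>R P v)"
    using fin v0(1) by (rule sum.remove[symmetric])
  also have "\<dots> = P x"
    by (simp add: xu linear_sum[OF lin] linear_scale[OF lin])
  also have "\<dots> = 0"
    using pos by (simp add: P_def proj_perp_self)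
  finally have sum0: "u v0 *\<^sub>R P v0 = - (\<Sum>v\<in>B - {v0}. u v *\<^sub>R P v)"
    by (simp add: eq_neg_iff_add_eq_0)
  have "P v0 = (1 / u v0) *\<^sub>R (u v0 *\<^sub>R P v0)"
    using v0(2) by simp
  also have "\<dots> = (1 / u v0) *\<^sub>R - (\<Sum>v\<in>B - {v0}. u v *\<^sub>R P v)"
    by (simp only: sum0)
  also have "\<dots> \<in> span (P ` (B - {v0}))"
    by (intro span_scale span_neg span_sum) (auto intro: span_base)
  finally have "P ` B \<subseteq> span (P ` (B - {v0}))"
    by (auto intro: span_base)
  then have "span (P ` B) \<subseteq> span (P ` (B - {v0}))"
    using span_mono span_span by blast
  then have span: "P ` span B \<subseteq> span (P ` (B - {v0}))"
    by (simp add: span_linear_image[OF lin])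
  have card: "card (P ` (B - {v0})) < card B"
    using card_image_le[of "B - {v0}" P] card_Diff1_less[OF fin v0(1)] fin by simp
  show thesis
    using fin card span by (intro that[of "P ` (B - {v0})"]) (simp_all add: P_def)
qed

lemma card_le_Suc_if_pairwise_negative:
  assumes "finite B" "X \<subseteq> span B" "pairwise (\<lambda>y z. b y z < 0) X"
  shows "card X \<le> card B + 1"
  using assms
proof (induction "card B" arbitrary: B X rule: less_induct)
  case less
  show ?case
  proof (cases "finite X \<and> X \<noteq> {}")
    case False
    then show ?thesis by auto
  next
    case True
    then obtain x where x: "x \<in> X" by blast
    show ?thesis
    proof (cases "b x x = 0")
      case True
      have "X = {x}"
        using x less.prems(3) eq_0_if_null[OF True] sym[of x]
        by (fastforce simp: pairwise_def)
      then show ?thesis by simp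
    next
      case False
      then have pos: "0 < b x x"
        using nonneg[of x] by linarith
      obtain B' where B': "finite B'" "card B' < card B" "proj_perp x ` span B \<subseteq> span B'"
        using span_proj_perp_smaller[OF less.prems(1) _ pos] x less.prems(2) by blast
      have neg: "b (proj_perp x y) (proj_perp x z) < 0"
        if "y \<in> X - {x}" "z \<in> X - {x}" "y \<noteq> z" for y z
        using proj_perp_proj_perp_le[OF pos, of y z] that x less.prems(3)
        by (fastforce simp: pairwise_def)
      have "inj_on (proj_perp x) (X - {x})"
        using neg nonneg by (metis inj_onI not_le)
      then have "card X = card (proj_perp x ` (X - {x})) + 1"
        using True x by (simp add: card_image card_gt_0_iff)
      also have "card (proj_perp x ` (X - {x})) \<le> card B' + 1"
        using less.prems(2) B' neg
        by (intro less.hyps[OF B'(2) B'(1)] pairwise_imageI) auto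
      finally show ?thesis
        using B'(2) by linarith
    qed
  qed
qed

definition antiparallel :: "'a \<Rightarrow> 'a \<Rightarrow> bool" where
  "antiparallel x y \<longleftrightarrow> (\<exists>c<0. \<forall>g. b y g = c * b x g)"

lemma antiparallel_if_proj_perp_null:
  assumes "0 < b x x" "0 < b y y" "b y x \<le> 0"
    and null: "b (proj_perp x y) (proj_perp x y) = 0"
  shows "antiparallel x y"
proof -
  define c where "c = b y x / b x x"
  have c: "b y g = c * b x g" for g
    using eq_0_if_null[OF null, of g] by (simp add: proj_perp_def c_def diff_left scaleR_left)
  have "c \<noteq> 0"
    using c[of y] assms(2) by auto
  moreover have "c \<le> 0"
    using assms(1,3) by (simp add: c_def divide_nonpos_pos)
  ultimately show ?thesis
    using c unfolding antiparallel_def by (metis order_le_less)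
qed

lemma pos_if_antiparallel_antiparallel:
  assumes "0 < b x x" "antiparallel x y" "antiparallel x z"
  shows "0 < b y z"
proof -
  obtain c d where "c < 0" "d < 0" "\<And>g. b y g = c * b x g" "\<And>g. b z g = d * b x g"
    using assms(2,3) unfolding antiparallel_def by blast
  then have "b y z = c * d * b x x"
    by (simp add: sym[of x z])
  with \<open>c < 0\<close> \<open>d < 0\<close> assms(1) show ?thesis
    by (simp add: mult_neg_neg)
qed

lemma project_pairwise_nonpos:
  assumes fin: "finite B" and XB: "X \<subseteq> span B" and finX: "finite X"
    and pos: "\<forall>y\<in>X. 0 < b y y" and nonpos: "pairwise (\<lambda>y z. b y z \<le> 0) X" and x: "x \<in> X"
  obtains B' Y where "finite B'" "card B' < card B" "Y \<subseteq> span B'" "finite Y"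
    "\<forall>y\<in>Y. 0 < b y y" "pairwise (\<lambda>y z. b y z \<le> 0) Y"
    "card X \<le> card Y + 2" "\<not> (\<exists>y\<in>X - {x}. antiparallel x y) \<Longrightarrow> card X \<le> card Y + 1"
proof -
  have bxx: "0 < b x x"
    using pos x by blast
  obtain B' where B': "finite B'" "card B' < card B" "proj_perp x ` span B \<subseteq> span B'"
    using span_proj_perp_smaller[OF fin _ bxx] x XB by blast
  txt \<open>The members of \<open>X - {x}\<close> with null projection are antiparallel to \<open>x\<close>, and two
    vectors antiparallel to \<open>x\<close> form an acute pair, so at most one member besides \<open>x\<close> is lost.\<close>
  define W where "W = {y \<in> X - {x}. 0 < b (proj_perp x y) (proj_perp x y)}"
  define Z where "Z = {y \<in> X - {x}. antiparallel x y}"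
  have nonpos_x: "b y x \<le> 0" if "y \<in> X - {x}" for y
    using nonpos x that by (auto simp: pairwise_def)
  have "X \<subseteq> insert x (W \<union> Z)"
    using antiparallel_if_proj_perp_null[OF bxx] nonpos_x pos nonneg
    by (force simp: W_def Z_def order_less_le)
  then have "card X \<le> card (insert x (W \<union> Z))"
    using finX by (intro card_mono) (auto simp: W_def Z_def)
  also have "\<dots> \<le> card W + card Z + 1"
    using card_Un_le[of W Z] finX
    by (simp add: W_def Z_def card_insert_if)
  finally have cardX: "card X \<le> card W + card Z + 1" .
  have "card Z \<le> 1"
    using pos_if_antiparallel_antiparallel[OF bxx] nonpos finX
    by (force simp: Z_def pairwise_def card_le_Suc0_iff_eq not_le)
  have nonpos_W: "b (proj_perp x y) (proj_perp x z) \<le> 0" if "y \<in> W" "z \<in> W" "y \<noteq> z" for y z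
    using proj_perp_proj_perp_le[OF bxx, of y z] nonpos_x nonpos that
    by (force simp: W_def pairwise_def)
  have "inj_on (proj_perp x) W"
    using nonpos_W by (force simp: W_def inj_on_def not_le)
  then have cardW: "card (proj_perp x ` W) = card W"
    by (rule card_image)
  show thesis
  proof (rule that[OF B'(1,2)])
    show "proj_perp x ` W \<subseteq> span B'"
      using B'(3) XB by (auto simp: W_def)
    show "finite (proj_perp x ` W)"
      using finX by (simp add: W_def)
    show "\<forall>y\<in>proj_perp x ` W. 0 < b y y"
      by (simp add: W_def)
    show "pairwise (\<lambda>y z. b y z \<le> 0) (proj_perp x ` W)"
      using nonpos_W by (intro pairwise_imageI) auto
    show "card X \<le> card (proj_perp x ` W) + 2"
      using cardW cardX \<open>card Z \<le> 1\<close> by linarith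
    show "card X \<le> card (proj_perp x ` W) + 1" if "\<not> (\<exists>y\<in>X - {x}. antiparallel x y)"
    proof -
      have "Z = {}"
        using that by (auto simp: Z_def)
      with cardW cardX show ?thesis
        by simp
    qed
  qed
qed

lemma card_le_double_if_pairwise_nonpos:
  assumes "finite B" "X \<subseteq> span B" "finite X" "\<forall>y\<in>X. 0 < b y y" "pairwise (\<lambda>y z. b y z \<le> 0) X"
  shows "card X \<le> 2 * card B"
  using assms
proof (induction "card B" arbitrary: B X rule: less_induct)
  case less
  show ?case
  proof (cases "X = {}")
    case False
    then obtain x where "x \<in> X" by blast
    then obtain B' Y where "finite B'" "card B' < card B" "Y \<subseteq> span B'" "finite Y"
      "\<forall>y\<in>Y. 0 < b y y" "pairwise (\<lambda>y z. b y z \<le> 0) Y" "card X \<le> card Y + 2"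
      using project_pairwise_nonpos[OF less.prems] by metis
    with less.hyps[of B' Y] show ?thesis
      by linarith
  qed simp
qed

lemma antiparallel_exists_if_card_eq_double:
  assumes "finite B" "X \<subseteq> span B" "finite X" "\<forall>y\<in>X. 0 < b y y" "pairwise (\<lambda>y z. b y z \<le> 0) X"
    and "card X = 2 * card B" "x \<in> X"
  shows "\<exists>y\<in>X - {x}. antiparallel x y"
proof (rule ccontr)
  assume "\<not> ?thesis"
  moreover obtain B' Y where "finite B'" "card B' < card B" "Y \<subseteq> span B'" "finite Y"
    "\<forall>y\<in>Y. 0 < b y y" "pairwise (\<lambda>y z. b y z \<le> 0) Y"
    "\<not> (\<exists>y\<in>X - {x}. antiparallel x y) \<Longrightarrow> card X \<le> card Y + 1"
    using project_pairwise_nonpos[OF assms(1-5,7)] by metis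
  ultimately show False
    using card_le_double_if_pairwise_nonpos[of B' Y] \<open>card X = 2 * card B\<close> by linarith
qed

end

instantiation "fun" :: (type, real_vector) real_vector
begin

definition scaleR_fun :: "real \<Rightarrow> ('a \<Rightarrow> 'b) \<Rightarrow> 'a \<Rightarrow> 'b" where
  "scaleR_fun c f = (\<lambda>x. c *\<^sub>R f x)"

instance
  by standard (simp_all add: scaleR_fun_def fun_eq_iff scaleR_add_right scaleR_add_left)

end

lemma scaleR_fun_apply [simp]: "(c *\<^sub>R f) x = c *\<^sub>R f x"
  by (simp add: scaleR_fun_def)

lemma sum_fun_apply: "(\<Sum>a\<in>A. f a) x = (\<Sum>a\<in>A. f a x)"
  by (induction A rule: infinite_finite_induct) simp_all

definition coord_inner :: "nat \<Rightarrow> (nat \<Rightarrow> real) \<Rightarrow> (nat \<Rightarrow> real) \<Rightarrow> real" where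
  "coord_inner m f g = (\<Sum>i=1..m. f i * g i)"

interpretation coord_inner: psd_form "coord_inner m" for m
  by unfold_locales
    (simp_all add: coord_inner_def sum.distrib sum_distrib_left algebra_simps sum_nonneg)

lemma coord_inner_indicator_singleton:
  "i \<in> {1..m} \<Longrightarrow> coord_inner m f (indicator {i}) = f i"
  by (simp add: coord_inner_def)

lemma coord_inner_indicator:
  "coord_inner m (indicator J) (indicator K) = real (card ({1..m} \<inter> (J \<inter> K)))"
  using sum_indicator_mult[of "{1..m}" "J \<inter> K" "\<lambda>_. 1 :: real"]
  by (simp add: coord_inner_def indicator_inter_arith[symmetric])

lemma indicator_in_span_singletons:
  assumes "finite J"
  shows "(indicator J :: 'a \<Rightarrow> real) \<in> span ((\<lambda>i. indicator {i}) ` J)"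
proof -
  have "(indicator J :: 'a \<Rightarrow> real) = (\<Sum>i\<in>J. indicator {i})"
    using assms by (simp add: fun_eq_iff sum_fun_apply sum_indicator_eq_card indicator_def)
  also have "\<dots> \<in> span ((\<lambda>i. indicator {i}) ` J)"
    by (intro span_sum span_base) auto
  finally show ?thesis .
qed

text \<open>\<open>centred_indicator m J = 1\<^sub>J - (|J|/m) \<one>\<close> on \<open>{1..m}\<close>.\<close>

definition centred_indicator :: "nat \<Rightarrow> nat set \<Rightarrow> nat \<Rightarrow> real" where
  "centred_indicator m J = coord_inner.proj_perp m (indicator {1..m}) (indicator J)"

lemma coord_inner_indicator_subset:
  assumes "J \<subseteq> {1..m}" "K \<subseteq> {1..m}"
  shows "coord_inner m (indicator J) (indicator K) = real (card (J \<inter> K))"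
proof -
  have "{1..m} \<inter> (J \<inter> K) = J \<inter> K"
    using assms by blast
  then show ?thesis
    by (simp only: coord_inner_indicator)
qed

lemma centred_indicator_apply:
  assumes "J \<subseteq> {1..m}" "i \<in> {1..m}"
  shows "centred_indicator m J i = indicator J i - real (card J) / real m"
  using assms coord_inner_indicator_subset[of J m "{1..m}"] coord_inner_indicator_subset[of "{1..m}" m "{1..m}"]
  by (simp add: centred_indicator_def coord_inner.proj_perp_def Int_absorb2)

lemma coord_inner_centred_indicator:
  assumes "J \<subseteq> {1..m}" "K \<subseteq> {1..m}" "0 < m"
  shows "coord_inner m (centred_indicator m J) (centred_indicator m K)
       = real (card (J \<inter> K)) - real (card J) * real (card K) / real m"
  using assms coord_inner_indicator_subset[of _ m "{1..m}"] coord_inner_indicator_subset[of "{1..m}" m "{1..m}"]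
    coord_inner_indicator_subset[of J m K]
  by (simp add: centred_indicator_def coord_inner.proj_perp_proj_perp Int_absorb2)

lemma centred_indicators_in_small_span:
  assumes "0 < m"
  obtains B where "finite B" "card B < m" "\<And>J. J \<subseteq> {1..m} \<Longrightarrow> centred_indicator m J \<in> span B"
proof -
  define E where "E = (\<lambda>i. indicator {i} :: nat \<Rightarrow> real) ` {1..m}"
  have E: "indicator J \<in> span E" if "J \<subseteq> {1..m}" for J
  proof -
    have "finite J"
      using that finite_subset by blast
    then have "(indicator J :: nat \<Rightarrow> real) \<in> span ((\<lambda>i. indicator {i}) ` J)"
      by (rule indicator_in_span_singletons)
    also have "\<dots> \<subseteq> span E"
      unfolding E_def using that by (intro span_mono image_mono)
    finally show ?thesis .
  qed
  have "finite E" "indicator {1..m} \<in> span E"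
      "0 < coord_inner m (indicator {1..m}) (indicator {1..m})"
    using E coord_inner_indicator_subset[of "{1..m}" m "{1..m}"] assms by (simp_all add: E_def)
  then obtain B where B: "finite B" "card B < card E"
      "coord_inner.proj_perp m (indicator {1..m}) ` span E \<subseteq> span B"
    by (rule coord_inner.span_proj_perp_smaller)
  have "card E \<le> m"
    using card_image_le[of "{1..m}" "\<lambda>i. indicator {i} :: nat \<Rightarrow> real"] by (simp add: E_def)
  with B E show thesis
    by (intro that[of B]) (auto simp: centred_indicator_def)
qed

lemma inj_on_centred_indicator:
  assumes "\<forall>J\<in>S. J \<subseteq> {1..m} \<and> card J = l"
  shows "inj_on (centred_indicator m) S"
proof (rule inj_onI)
  fix J K
  assume J: "J \<in> S" and K: "K \<in> S" and eq: "centred_indicator m J = centred_indicator m K"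
  have "i \<in> J \<longleftrightarrow> i \<in> K" for i
  proof (cases "i \<in> {1..m}")
    case True
    have "centred_indicator m J i = centred_indicator m K i"
      using eq by simp
    then have "indicator J i = (indicator K i :: real)"
      using True assms J K by (simp add: centred_indicator_apply)
    then show ?thesis
      by (cases "i \<in> J"; cases "i \<in> K") simp_all
  next
    case False
    then show ?thesis
      using assms J K by blast
  qed
  then show "J = K"
    by blast
qed

lemma centred_indicator_family:
  assumes "0 < m" "\<forall>J\<in>S. J \<subseteq> {1..m} \<and> card J = l"
  obtains B where "finite B" "card B < m" "centred_indicator m ` S \<subseteq> span B"
    "card (centred_indicator m ` S) = card S"
proof -
  obtain B where "finite B" "card B < m" "\<And>J. J \<subseteq> {1..m} \<Longrightarrow> centred_indicator m J \<in> span B"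
    using centred_indicators_in_small_span[OF assms(1)] by blast
  with assms(2) show thesis
    using card_image[OF inj_on_centred_indicator[OF assms(2)]] by (intro that[of B]) auto
qed

lemma iff_not_if_shift_eq_neg_mult:
  fixes a c :: real
  assumes "0 < a" "a < 1" "c < 0" "of_bool P - a = c * (of_bool Q - a)"
  shows "P \<longleftrightarrow> \<not> Q"
proof -
  have "c * (1 - a) < 0" "c * a < 0"
    using assms(1-3) by (simp_all add: mult_neg_pos)
  with assms show ?thesis
    by (cases P; cases Q) auto
qed

lemma complement_if_antiparallel_centred_indicator:
  assumes J: "J \<subseteq> {1..m}" "card J = l" and K: "K \<subseteq> {1..m}" "card K = l"
    and "0 < l" "l < m"
    and "coord_inner.antiparallel m (centred_indicator m J) (centred_indicator m K)"
  shows "K = {1..m} - J"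
proof -
  obtain c where c: "c < 0"
    "\<And>g. coord_inner m (centred_indicator m K) g = c * coord_inner m (centred_indicator m J) g"
    using assms(7) unfolding coord_inner.antiparallel_def by blast
  have "i \<in> K \<longleftrightarrow> i \<notin> J" if i: "i \<in> {1..m}" for i
  proof (rule iff_not_if_shift_eq_neg_mult)
    show "0 < real l / real m" "real l / real m < 1" "c < 0"
      using \<open>0 < l\<close> \<open>l < m\<close> c(1) by simp_all
    show "of_bool (i \<in> K) - real l / real m = c * (of_bool (i \<in> J) - real l / real m)"
      using c(2)[of "indicator {i}"] i J K
      by (simp add: coord_inner_indicator_singleton centred_indicator_apply indicator_def)
  qed
  then show ?thesis
    using K(1) by blast
qed

lemma card_le_if_pairwise_inter_less:
  assumes "0 < m" "\<forall>J\<in>S. J \<subseteq> {1..m} \<and> card J = l"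
    and "pairwise (\<lambda>J K. real (card (J \<inter> K)) < (real l)\<^sup>2 / real m) S"
  shows "card S \<le> m"
proof -
  obtain B where B: "finite B" "card B < m" "centred_indicator m ` S \<subseteq> span B"
    and card: "card (centred_indicator m ` S) = card S"
    using centred_indicator_family[OF assms(1,2)] by blast
  have "pairwise (\<lambda>y z. coord_inner m y z < 0) (centred_indicator m ` S)"
    using assms by (intro pairwise_imageI)
      (auto simp: coord_inner_centred_indicator pairwise_def power2_eq_square)
  then have "card (centred_indicator m ` S) \<le> card B + 1"
    using B by (intro coord_inner.card_le_Suc_if_pairwise_negative) auto
  with B(2) card show ?thesis
    by linarith
qed

lemma complement_mem_if_pairwise_inter_le:
  assumes "0 < l" "l < m" "\<forall>J\<in>S. J \<subseteq> {1..m} \<and> card J = l"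
    and "pairwise (\<lambda>J K. real (card (J \<inter> K)) \<le> (real l)\<^sup>2 / real m) S"
    and "card S = 2 * (m - 1)" "J \<in> S"
  shows "{1..m} - J \<in> S"
proof -
  have m: "0 < m"
    using assms(1,2) by linarith
  obtain B where B: "finite B" "card B < m" "centred_indicator m ` S \<subseteq> span B"
    and card: "card (centred_indicator m ` S) = card S"
    using centred_indicator_family[OF m assms(3)] by blast
  have finite: "finite (centred_indicator m ` S)"
    using assms(3) by (intro finite_imageI finite_subset[of S "Pow {1..m}"]) auto
  have pos: "\<forall>y\<in>centred_indicator m ` S. 0 < coord_inner m y y"
  proof
    fix y
    assume "y \<in> centred_indicator m ` S"
    then obtain J where "J \<in> S" "y = centred_indicator m J"
      by blast
    then have "coord_inner m y y = real l * (real m - real l) / real m"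
      using assms(3) m by (simp add: coord_inner_centred_indicator field_simps)
    then show "0 < coord_inner m y y"
      using assms(1,2) by simp
  qed
  have nonpos: "pairwise (\<lambda>y z. coord_inner m y z \<le> 0) (centred_indicator m ` S)"
    using assms(3,4) m by (intro pairwise_imageI)
      (auto simp: coord_inner_centred_indicator pairwise_def power2_eq_square)
  have "card (centred_indicator m ` S) \<le> 2 * card B"
    using B(1,3) finite pos nonpos by (rule coord_inner.card_le_double_if_pairwise_nonpos)
  with B(2) card assms(5) have "card (centred_indicator m ` S) = 2 * card B"
    by linarith
  then obtain y where "y \<in> centred_indicator m ` S - {centred_indicator m J}"
      "coord_inner.antiparallel m (centred_indicator m J) y"
    using coord_inner.antiparallel_exists_if_card_eq_double[OF B(1,3) finite pos nonpos]
      assms(6) by blast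
  then obtain K where "K \<in> S" "coord_inner.antiparallel m (centred_indicator m J) (centred_indicator m K)"
    by blast
  then have "K = {1..m} - J"
    using assms(1-3,6) by (intro complement_if_antiparallel_centred_indicator) auto
  with \<open>K \<in> S\<close> show "{1..m} - J \<in> S"
    by simp
qed

lemma partition_on_complement_pairs:
  assumes "\<forall>J\<in>S. J \<subseteq> A \<and> A - J \<in> S"
  shows "partition_on S ((\<lambda>J. {J, A - J}) ` S)"
proof (rule partition_onI)
  show "\<Union> ((\<lambda>J. {J, A - J}) ` S) = S"
    using assms by auto
  fix p q
  assume "p \<in> (\<lambda>J. {J, A - J}) ` S" "q \<in> (\<lambda>J. {J, A - J}) ` S" "p \<noteq> q"
  moreover have "A - (A - J) = J" if "J \<in> S" for J
    using assms that by blast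
  ultimately show "disjnt p q"
    by (auto simp: disjnt_def)
qed auto

lemma card_complement_pairs:
  assumes "\<forall>J\<in>S. J \<subseteq> A \<and> A - J \<in> S" "A \<noteq> {}" "finite S"
  shows "2 * card ((\<lambda>J. {J, A - J}) ` S) = card S"
proof -
  have "J \<noteq> A - J" if "J \<in> S" for J
    using assms(1,2) that by blast
  then have "card p = 2" if "p \<in> (\<lambda>J. {J, A - J}) ` S" for p
    using that by auto
  then show ?thesis
    using product_partition[OF partition_on_complement_pairs[OF assms(1)]] assms(3)
    by (fastforce simp: mult.commute)
qed

lemma card_le_1_if_empty_or_full:
  assumes "\<forall>J\<in>S. J \<subseteq> {1..m} \<and> card J = l" "l = 0 \<or> m \<le> l"
  shows "card S \<le> 1"
proof -
  have "J = (if l = 0 then {} else {1..m})" if "J \<in> S" for J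
  proof -
    have "J \<subseteq> {1..m}" "card J = l"
      using assms(1) that by auto
    moreover have "finite J"
      using finite_subset[OF \<open>J \<subseteq> {1..m}\<close>] by simp
    ultimately show ?thesis
      using assms(2) card_subset_eq[of "{1..m}" J] card_mono[of "{1..m}" J] by auto
  qed
  then have "S \<subseteq> {if l = 0 then {} else {1..m}}"
    by blast
  then show ?thesis
    using card_mono[of "{if l = 0 then {} else {1..m}}" S] by simp
qed

lemma card_inter_le_max_pair_intersection:
  assumes "finite S" "J \<in> S" "K \<in> S" "J \<noteq> K"
  shows "card (J \<inter> K) \<le> max_pair_intersection S"
proof -
  have "{card (J \<inter> J') | J J'. J \<in> S \<and> J' \<in> S \<and> J \<noteq> J'}
      \<subseteq> (\<lambda>(J, J'). card (J \<inter> J')) ` (S \<times> S)"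
    by auto
  then have "finite {card (J \<inter> J') | J J'. J \<in> S \<and> J' \<in> S \<and> J \<noteq> J'}"
    by (rule finite_subset) (use assms(1) in simp)
  then show ?thesis
    unfolding max_pair_intersection_def by (rule Max_ge) (use assms(2-4) in blast)
qed

lemma complement_pair_partition_if_pairwise_inter_le:
  assumes "0 < l" "l < m" "\<forall>J\<in>S. J \<subseteq> {1..m} \<and> card J = l"
    and "pairwise (\<lambda>J K. real (card (J \<inter> K)) \<le> (real l)\<^sup>2 / real m) S"
    and card: "card S = 2 * (m - 1)"
  shows "\<exists>P. partition_on S P \<and> card P = m - 1 \<and>
           (\<forall>p\<in>P. \<exists>A B. p = {A, B} \<and> A \<noteq> B \<and> A \<inter> B = {} \<and> 2 * card A = m \<and> 2 * card B = m)"
proof -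
  have "finite S"
    using assms(3) by (intro finite_subset[of S "Pow {1..m}"]) auto
  have compl: "\<forall>J\<in>S. J \<subseteq> {1..m} \<and> {1..m} - J \<in> S"
    using complement_mem_if_pairwise_inter_le[OF assms(1-4) card] assms(3) by blast
  have size: "card J = l" "card ({1..m} - J) = l" if "J \<in> S" for J
    using assms(3) compl that by auto
  have half: "2 * l = m"
  proof -
    have "S \<noteq> {}"
      using card assms(1,2) by auto
    then obtain J where J: "J \<in> S"
      by blast
    then have "card ({1..m} - J) = m - l"
      using assms(3) card_Diff_subset[of J "{1..m}"] finite_subset[of J "{1..m}"] by simp
    with size(2)[OF J] assms(2) show ?thesis
      by linarith
  qed
  define P where "P = (\<lambda>J. {J, {1..m} - J}) ` S"
  have "partition_on S P"
    unfolding P_def using compl by (rule partition_on_complement_pairs)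
  moreover have "2 * card P = card S"
    unfolding P_def by (rule card_complement_pairs[OF compl _ \<open>finite S\<close>]) (use assms(2) in simp)
  then have "card P = m - 1"
    using card by simp
  moreover have "\<exists>A B. p = {A, B} \<and> A \<noteq> B \<and> A \<inter> B = {} \<and> 2 * card A = m \<and> 2 * card B = m"
    if "p \<in> P" for p
  proof -
    obtain J where J: "J \<in> S" "p = {J, {1..m} - J}"
      using \<open>p \<in> P\<close> by (auto simp: P_def)
    have "J \<noteq> {}"
      using size(1)[OF J(1)] assms(1) by auto
    show ?thesis
    proof (intro exI conjI)
      show "p = {J, {1..m} - J}"
        by (rule J(2))
      show "J \<noteq> {1..m} - J" "J \<inter> ({1..m} - J) = {}"
        using \<open>J \<noteq> {}\<close> by blast+
      show "2 * card J = m" "2 * card ({1..m} - J) = m"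
        using size[OF J(1)] half by simp_all
    qed
  qed
  ultimately show ?thesis
    by blast
qed

theorem corollary3p9:
  fixes S :: "nat set set" and m l n :: nat
  assumes subs: "\<forall>J\<in>S. J \<subseteq> {1..m}"
    and size: "\<forall>J\<in>S. card J = l"
    and cardS: "card S = n"
    and gt: "n > m"
  shows "real (max_pair_intersection S) \<ge> (real l)^2 / real m
       \<and> ((n = 2 * (m - 1) \<and> real (max_pair_intersection S) = (real l)^2 / real m) \<longrightarrow>
           (\<exists>P. partition_on S P \<and> card P = m - 1 \<and>
               (\<forall>p\<in>P. \<exists>A B. p = {A, B} \<and> A \<noteq> B \<and> A \<inter> B = {}
                                \<and> 2 * card A = m \<and> 2 * card B = m)))"
proof (cases "m = 0")
  case False
  have fam: "\<forall>J\<in>S. J \<subseteq> {1..m} \<and> card J = l"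
    using subs size by blast
  have "finite S"
    using subs by (intro finite_subset[of S "Pow {1..m}"]) auto
  then have le_max: "pairwise (\<lambda>J K. card (J \<inter> K) \<le> max_pair_intersection S) S"
    by (auto simp: pairwise_def card_inter_le_max_pair_intersection)
  have "(real l)\<^sup>2 / real m \<le> real (max_pair_intersection S)"
  proof (rule ccontr)
    assume "\<not> ?thesis"
    then have "pairwise (\<lambda>J K. real (card (J \<inter> K)) < (real l)\<^sup>2 / real m) S"
      by (intro pairwise_mono[OF le_max]) auto
    then have "card S \<le> m"
      using False fam by (intro card_le_if_pairwise_inter_less) auto
    with cardS gt show False
      by simp
  qed
  moreover have "\<exists>P. partition_on S P \<and> card P = m - 1 \<and>
      (\<forall>p\<in>P. \<exists>A B. p = {A, B} \<and> A \<noteq> B \<and> A \<inter> B = {} \<and> 2 * card A = m \<and> 2 * card B = m)"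
    if "n = 2 * (m - 1)" "real (max_pair_intersection S) = (real l)\<^sup>2 / real m"
  proof (rule complement_pair_partition_if_pairwise_inter_le[OF _ _ fam])
    have "\<not> card S \<le> 1"
      using cardS gt False by simp
    then show "0 < l" "l < m"
      using card_le_1_if_empty_or_full[OF fam] by (meson neq0_conv not_le)+
    show "pairwise (\<lambda>J K. real (card (J \<inter> K)) \<le> (real l)\<^sup>2 / real m) S"
      using that(2) by (intro pairwise_mono[OF le_max]) auto
  qed (use that(1) cardS in simp)
  ultimately show ?thesis
    by blast
qed (use gt in simp)

end
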